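(* Let $Q=ABCD$ be a non-degenerate parallelogram of perimeter $2$ and $Q^\circ=KLMN$ its dual. Then $|KL|=|BC|$, $|LM|=|AB|$, $|KM|=|AC|$, and $Q^\circ$ is a parallelogram congruent to $Q$ (parallelograms are self-dual up to isometry).
   Context: Identify $\mathbb{R}^2$ with $\mathbb{C}$. A quadrangle $Q=ABCD$ is an ordered 4-tuple of points $A,B,C,D\in\mathbb{C}$: $A$ is the first vertex and the order $A\to B\to C\to D\to A$ is the direction of traversal. Its edge vectors are $z_1=B-A$, $z_2=C-B$, $z_3=D-C$, $z_4=A-D$, so $z_1+z_2+z_3+z_4=0$; its perimeter is $|z_1|+|z_2|+|z_3|+|z_4|$. $Q$ is non-degenerate if each pair of consecutive edge vectors $(z_1,z_2),(z_2,z_3),(z_3,z_4),(z_4,z_1)$ consists of nonzero, non-collinear vectors. Associated plane: for a non-degenerate $Q$ of perimeter $2$, choose $u_1,\dots,u_4\in\mathbb{C}$ with $u_k^2=z_k$, where $u_1$ is an arbitrary square root of $z_1$ and for $k=1,2,3$ the sign of $u_{k+1}$ is chosen so that $\operatorname{Im}(\overline{u_k}u_{k+1})$ has the same sign as $\operatorname{Im}(\overline{z_k}z_{k+1})$. Write $u_k=a_k+i b_k$ and $\bar a=(a_1,a_2,a_3,a_4)$, $\bar b=(b_1,b_2,b_3,b_4)$; these are orthonormal in $\mathbb{R}^4$. Let $\Pi=\operatorname{span}(\bar a,\bar b)$ and $\Pi^\perp$ its orthogonal complement. Dual quadrangle: choose an orthonormal basis $(\bar c,\bar d)$ of $\Pi^\perp$,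 put $w_k=(c_k+i d_k)^2$; then $\sum_k w_k=0$ and $\sum_k|w_k|=2$. The dual quadrangle $Q^\circ=KLMN$ is the quadrangle with $L-K=w_1$, $M-L=w_2$, $N-M=w_3$, $K-N=w_4$. It is determined up to rotation, reflection and translation. *)

theory Defs
  imports "HOL-Analysis.Analysis"
begin

definition edge :: "complex \<Rightarrow> complex \<Rightarrow> complex \<Rightarrow> complex \<Rightarrow> nat \<Rightarrow> complex" where
  "edge A B C D k = (if k = 1 then B - A else if k = 2 then C - B
                     else if k = 3 then D - C else A - D)"

definition perimeter :: "complex \<Rightarrow> complex \<Rightarrow> complex \<Rightarrow> complex \<Rightarrow> real" where
  "perimeter A B C D = cmod (B - A) + cmod (C - B) + cmod (D - C) + cmod (A - D)"

definition collinear_vec :: "complex \<Rightarrow> complex \<Rightarrow> bool" where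
  "collinear_vec z w \<longleftrightarrow> (\<exists>t::real. z = of_real t * w \<or> w = of_real t * z)"

definition nondegenerate_quad :: "complex \<Rightarrow> complex \<Rightarrow> complex \<Rightarrow> complex \<Rightarrow> bool" where
  "nondegenerate_quad A B C D \<longleftrightarrow>
     (\<forall>k\<in>{1..4::nat}. let z = edge A B C D k; w = edge A B C D (if k = 4 then 1 else k + 1)
        in z \<noteq> 0 \<and> w \<noteq> 0 \<and> \<not> collinear_vec z w)"

definition parallelogram :: "complex \<Rightarrow> complex \<Rightarrow> complex \<Rightarrow> complex \<Rightarrow> bool" where
  "parallelogram A B C D \<longleftrightarrow> B - A = C - D"

text \<open>The square roots u_1..u_4 used to define the associated plane: u_k^2 = z_k,
  u_1 arbitrary, and sign of Im(conj u_k u_(k+1)) equals sign of Im(conj z_k z_(k+1)).\<close>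
definition associated_roots :: "complex \<Rightarrow> complex \<Rightarrow> complex \<Rightarrow> complex \<Rightarrow> (nat \<Rightarrow> complex) \<Rightarrow> bool" where
  "associated_roots A B C D u \<longleftrightarrow>
     (\<forall>k\<in>{1..4::nat}. (u k)\<^sup>2 = edge A B C D k) \<and>
     (\<forall>k\<in>{1..3::nat}. sgn (Im (cnj (u k) * u (k + 1)))
                       = sgn (Im (cnj (edge A B C D k) * edge A B C D (k + 1))))"

definition inner4 :: "(nat \<Rightarrow> real) \<Rightarrow> (nat \<Rightarrow> real) \<Rightarrow> real" where
  "inner4 x y = (\<Sum>k=1..4. x k * y k)"

text \<open>(c, d) is an orthonormal basis of the orthogonal complement of
  Pi = span(a, b), where a_k = Re u_k, b_k = Im u_k. (Pi^perp is 2-dimensional,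
  so any orthonormal pair in it is a basis.)\<close>
definition dual_basis :: "(nat \<Rightarrow> complex) \<Rightarrow> (nat \<Rightarrow> real) \<Rightarrow> (nat \<Rightarrow> real) \<Rightarrow> bool" where
  "dual_basis u c d \<longleftrightarrow>
     (let a = (\<lambda>k. Re (u k)); b = (\<lambda>k. Im (u k)) in
       inner4 c a = 0 \<and> inner4 c b = 0 \<and> inner4 d a = 0 \<and> inner4 d b = 0 \<and>
       inner4 c c = 1 \<and> inner4 d d = 1 \<and> inner4 c d = 0)"

definition dual_quad :: "(nat \<Rightarrow> real) \<Rightarrow> (nat \<Rightarrow> real) \<Rightarrow> complex \<Rightarrow> complex \<Rightarrow> complex \<Rightarrow> complex \<Rightarrow> bool" where
  "dual_quad c d K L M N \<longleftrightarrow>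
     (let w = (\<lambda>k. (Complex (c k) (d k))\<^sup>2) in
       L - K = w 1 \<and> M - L = w 2 \<and> N - M = w 3 \<and> K - N = w 4)"

definition plane_isometry :: "(complex \<Rightarrow> complex) \<Rightarrow> bool" where
  "plane_isometry f \<longleftrightarrow> (\<forall>x y. dist (f x) (f y) = dist x y)"

end

theory Submission
  imports Defs
begin

text \<open>Write \<open>\<zeta>\<^sub>k = c\<^sub>k + i d\<^sub>k\<close>, so that \<open>w\<^sub>k = \<zeta>\<^sub>k\<^sup>2\<close>. The vectors \<open>a, b, c, d\<close> form an
  orthonormal basis of \<open>\<real>\<^sup>4\<close>, so the rows of the matrix with these columns are orthonormal as
  well: \<open>Re (cnj u\<^sub>k * u\<^sub>m) + Re (cnj \<zeta>\<^sub>k * \<zeta>\<^sub>m) = \<delta>\<^sub>k\<^sub>m\<close>. On the diagonal this says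
  \<open>|w\<^sub>k| = 1 - |z\<^sub>k|\<close>, which for a parallelogram of perimeter 2 exchanges the two side lengths.
  Off the diagonal, \<open>u\<^sub>3 = \<plusminus>i u\<^sub>1\<close> gives \<open>\<zeta>\<^sub>1 \<perp> \<zeta>\<^sub>3\<close>, hence \<open>w\<^sub>3 = -w\<^sub>1\<close>, and
  \<open>Re (cnj \<zeta>\<^sub>1 * \<zeta>\<^sub>2) = -Re (cnj u\<^sub>1 * u\<^sub>2)\<close> shows that \<open>w\<^sub>1, w\<^sub>2\<close> enclose the same angle
  as \<open>-z\<^sub>2, -z\<^sub>1\<close>, so \<open>KLMN\<close> is congruent to \<open>CBAD\<close>.\<close>

lemma orthonormal_rows_if_orthonormal_columns:
  fixes col :: "'n::finite \<Rightarrow> 'n \<Rightarrow> real"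
  assumes "\<And>j l. (\<Sum>k\<in>UNIV. col j k * col l k) = (if j = l then 1 else 0)"
  shows "(\<Sum>j\<in>UNIV. col j k * col j m) = (if k = m then 1 else 0)"
proof -
  define Q :: "real^'n^'n" where "Q = (\<chi> i j. col j i)"
  have "transpose Q ** Q = mat 1"
    using assms by (simp add: vec_eq_iff matrix_matrix_mult_def transpose_def Q_def mat_def)
  then have "Q ** transpose Q = mat 1"
    using matrix_left_right_inverse by blast
  then have "(Q ** transpose Q) $ k $ m = mat 1 $ k $ m" by simp
  then show ?thesis by (simp add: matrix_matrix_mult_def transpose_def Q_def mat_def)
qed

lemma orthonormal_rows_if_orthonormal_columns_4:
  fixes col :: "nat \<Rightarrow> nat \<Rightarrow> real"
  assumes "\<And>j l. j \<in> {1..4} \<Longrightarrow> l \<in> {1..4} \<Longrightarrow>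
             (\<Sum>k=1..4. col j k * col l k) = (if j = l then 1 else 0)"
    and "k \<in> {1..4}" "m \<in> {1..4}"
  shows "(\<Sum>j=1..4. col j k * col j m) = (if k = m then 1 else 0)"
proof -
  obtain idx :: "4 \<Rightarrow> nat" where idx: "bij_betw idx UNIV {1..4}"
    using finite_same_card_bij[of "UNIV :: 4 set" "{1..4::nat}"] by auto
  have reindex: "(\<Sum>i\<in>UNIV. g (idx i)) = (\<Sum>k=1..4. g k)" for g :: "nat \<Rightarrow> real"
    using sum.reindex_bij_betw[OF idx] .
  have idx_range: "idx i \<in> {1..4}" for i
    using idx by (auto simp: bij_betw_def)
  have idx_eq: "idx i = idx i' \<longleftrightarrow> i = i'" for i i'
    using idx by (auto simp: bij_betw_def inj_eq)
  have "(\<Sum>i\<in>UNIV. col (idx j) (idx i) * col (idx l) (idx i)) = (if j = l then 1 else 0)" for j l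
    using reindex[of "\<lambda>k. col (idx j) k * col (idx l) k"] assms(1)[OF idx_range idx_range]
    by (simp add: idx_eq)
  from orthonormal_rows_if_orthonormal_columns[where col = "\<lambda>j l. col (idx j) (idx l)", OF this]
  have "(\<Sum>j\<in>UNIV. col (idx j) (idx i) * col (idx j) (idx i')) = (if i = i' then 1 else 0)" for i i' .
  moreover obtain i i' where "idx i = k" "idx i' = m"
    using assms(2,3) idx by (metis bij_betw_iff_bijections)
  ultimately show ?thesis
    using reindex[of "\<lambda>j. col j k * col j m"] idx_eq by auto
qed

lemma power2_eq_neg_power2_iff:
  fixes x y :: complex
  shows "y\<^sup>2 = - (x\<^sup>2) \<longleftrightarrow> Re (cnj x * y) = 0 \<and> cmod x = cmod y"
proof
  assume "y\<^sup>2 = - (x\<^sup>2)"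
  then have "(y - \<i> * x) * (y + \<i> * x) = 0"
    by (simp add: algebra_simps power2_eq_square)
  then have "y - \<i> * x = 0 \<or> y + \<i> * x = 0"
    by simp
  then have "y = \<i> * x \<or> y = - \<i> * x"
    by (auto simp: algebra_simps eq_neg_iff_add_eq_0)
  then show "Re (cnj x * y) = 0 \<and> cmod x = cmod y"
    by (auto simp: norm_mult)
next
  assume "Re (cnj x * y) = 0 \<and> cmod x = cmod y"
  moreover obtain a b c d where x: "x = Complex a b" and y: "y = Complex c d"
    by (meson complex.exhaust)
  ultimately have orth: "a * c + b * d = 0" and norms: "a\<^sup>2 + b\<^sup>2 = c\<^sup>2 + d\<^sup>2"
    by (auto simp: cmod_def)
  have "(c\<^sup>2 - d\<^sup>2 + a\<^sup>2 - b\<^sup>2)\<^sup>2 + (2 * c * d + 2 * a * b)\<^sup>2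
        = (a\<^sup>2 + b\<^sup>2 - c\<^sup>2 - d\<^sup>2)\<^sup>2 + 4 * (a * c + b * d)\<^sup>2"
    by algebra
  then have "c\<^sup>2 - d\<^sup>2 + a\<^sup>2 - b\<^sup>2 = 0 \<and> 2 * c * d + 2 * a * b = 0"
    using orth norms by (simp add: sum_power2_eq_zero_iff)
  then show "y\<^sup>2 = - (x\<^sup>2)"
    by (simp add: x y complex_eq_iff power2_eq_square algebra_simps)
qed

lemma Re_power2_eq:
  fixes p q :: complex
  assumes "(Re p)\<^sup>2 = (Re q)\<^sup>2" and "(cmod p)\<^sup>2 = (cmod q)\<^sup>2"
  shows "Re (p\<^sup>2) = Re (q\<^sup>2)"
proof -
  have "Re (z\<^sup>2) = 2 * (Re z)\<^sup>2 - (cmod z)\<^sup>2" for z :: complex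
    using cmod_power2[of z] by (simp add: power2_eq_square)
  then show ?thesis using assms by simp
qed

lemma div_mult_eq_of_cnj_mult_eq:
  fixes w1 w2 v1 v2 :: complex
  assumes "w1 \<noteq> 0" and "cmod w1 = cmod v1" and "cnj w1 * w2 = cnj v1 * v2"
  shows "v1 / w1 * w2 = v2"
proof -
  have "v1 \<noteq> 0"
    using assms(1,2) by (metis norm_eq_zero)
  have "v1 / w1 * w2 = v1 * (cnj w1 * w2) / (cnj w1 * w1)"
    using assms(1) by (simp add: field_simps)
  also have "\<dots> = (cnj v1 * v1) * v2 / (cnj w1 * w1)"
    using assms(3) by (simp add: ac_simps)
  also have "\<dots> = v2"
    using assms(1,2) \<open>v1 \<noteq> 0\<close> by (simp add: mult.commute[of "cnj _"] complex_norm_square[symmetric])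
  finally show ?thesis .
qed

lemma plane_isometry_affine:
  fixes \<alpha> P Q :: complex
  assumes "cmod \<alpha> = 1"
  shows "plane_isometry (\<lambda>x. Q + \<alpha> * (x - P))" and "plane_isometry (\<lambda>x. Q + \<alpha> * cnj (x - P))"
proof -
  have "Q + \<alpha> * (x - P) - (Q + \<alpha> * (y - P)) = \<alpha> * (x - y)"
    and "Q + \<alpha> * cnj (x - P) - (Q + \<alpha> * cnj (y - P)) = \<alpha> * cnj (x - y)" for x y
    by (simp_all add: algebra_simps)
  then show "plane_isometry (\<lambda>x. Q + \<alpha> * (x - P))" and "plane_isometry (\<lambda>x. Q + \<alpha> * cnj (x - P))"
    using assms by (simp_all add: plane_isometry_def dist_norm norm_mult
        flip: complex_cnj_diff)
qed

lemma congruent_pairs_plane_isometry: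
  fixes w1 w2 v1 v2 P Q :: complex
  assumes "w1 \<noteq> 0" and "cmod w1 = cmod v1" and "cmod w2 = cmod v2"
    and "Re (cnj w1 * w2) = Re (cnj v1 * v2)"
  shows "\<exists>f. plane_isometry f \<and> (\<forall>s t. f (P + of_real s * w1 + of_real t * w2) = Q + of_real s * v1 + of_real t * v2)"
proof -
  have "cmod (cnj w1 * w2) = cmod (cnj v1 * v2)"
    using assms(2,3) by (simp add: norm_mult)
  then have "(Im (cnj w1 * w2))\<^sup>2 = (Im (cnj v1 * v2))\<^sup>2"
    using assms(4) unfolding cmod_def by simp
  then have "cnj w1 * w2 = cnj v1 * v2 \<or> cnj (cnj w1) * cnj w2 = cnj v1 * v2"
    using assms(4) by (auto simp: complex_eq_iff power2_eq_iff)
  then show ?thesis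
  proof
    assume eq: "cnj w1 * w2 = cnj v1 * v2"
    define \<alpha> where "\<alpha> = v1 / w1"
    have rot: "\<alpha> * w1 = v1" "\<alpha> * w2 = v2"
      using div_mult_eq_of_cnj_mult_eq[OF assms(1,2) eq] assms(1) by (simp_all add: \<alpha>_def)
    have "Q + \<alpha> * (P + s * w1 + t * w2 - P) = Q + s * v1 + t * v2" for s t :: real
      by (simp add: algebra_simps flip: rot)
    moreover have "cmod \<alpha> = 1"
      using assms(1) assms(2)[symmetric] by (simp add: \<alpha>_def norm_divide)
    ultimately show ?thesis
      using plane_isometry_affine(1)[of \<alpha> Q P] by blast
  next
    assume eq: "cnj (cnj w1) * cnj w2 = cnj v1 * v2"
    define \<alpha> where "\<alpha> = v1 / cnj w1"
    have rot: "\<alpha> * cnj w1 = v1" "\<alpha> * cnj w2 = v2"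
      using div_mult_eq_of_cnj_mult_eq[of "cnj w1", OF _ _ eq] assms(1,2) by (simp_all add: \<alpha>_def)
    have "Q + \<alpha> * cnj (P + s * w1 + t * w2 - P) = Q + s * v1 + t * v2" for s t :: real
      by (simp add: algebra_simps flip: rot)
    moreover have "cmod \<alpha> = 1"
      using assms(1) assms(2)[symmetric] by (simp add: \<alpha>_def norm_divide)
    ultimately show ?thesis
      using plane_isometry_affine(2)[of \<alpha> Q P] by blast
  qed
qed

lemma inner4_eq: "inner4 x y = x 1 * y 1 + x 2 * y 2 + x 3 * y 3 + x 4 * y 4"
  by (simp add: inner4_def numeral_eq_Suc)

lemma sum_edges: "edge A B C D 1 + edge A B C D 2 + edge A B C D 3 + edge A B C D 4 = 0"
  by (simp add: edge_def)

lemma perimeter_eq_sum_norm_edges: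
  "perimeter A B C D = cmod (edge A B C D 1) + cmod (edge A B C D 2) + cmod (edge A B C D 3)
     + cmod (edge A B C D 4)"
  by (simp add: perimeter_def edge_def)

lemma edge_nonzero_if_nondegenerate_quad:
  assumes "nondegenerate_quad A B C D" and "k \<in> {1..4}"
  shows "edge A B C D k \<noteq> 0"
  using assms unfolding nondegenerate_quad_def Let_def by blast

lemma parallelogram_edges:
  assumes "parallelogram A B C D"
  shows "edge A B C D 3 = - edge A B C D 1" and "edge A B C D 4 = - edge A B C D 2"
  using assms by (auto simp: parallelogram_def edge_def algebra_simps)

lemma edge_roots_orthonormal:
  fixes u :: "nat \<Rightarrow> complex"
  assumes "perimeter A B C D = 2" and roots: "\<And>k. k \<in> {1..4} \<Longrightarrow> (u k)\<^sup>2 = edge A B C D k"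
  defines "a \<equiv> \<lambda>k. Re (u k)" and "b \<equiv> \<lambda>k. Im (u k)"
  shows "inner4 a a = 1" and "inner4 b b = 1" and "inner4 a b = 0"
proof -
  have sum_sq: "(u 1)\<^sup>2 + (u 2)\<^sup>2 + (u 3)\<^sup>2 + (u 4)\<^sup>2 = 0"
    using sum_edges roots by simp
  have "(cmod (u 1))\<^sup>2 + (cmod (u 2))\<^sup>2 + (cmod (u 3))\<^sup>2 + (cmod (u 4))\<^sup>2 = 2"
    using assms(1) roots by (simp add: perimeter_eq_sum_norm_edges flip: norm_power)
  moreover have "(cmod z)\<^sup>2 = Re z * Re z + Im z * Im z" for z
    using cmod_power2[of z] by (simp add: power2_eq_square)
  ultimately have "inner4 a a + inner4 b b = 2"
    by (simp add: inner4_eq a_def b_def)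
  moreover have "inner4 a a - inner4 b b = 0" and "2 * inner4 a b = 0"
    using arg_cong[OF sum_sq, of Re] arg_cong[OF sum_sq, of Im]
    by (simp_all add: inner4_eq a_def b_def power2_eq_square algebra_simps)
  ultimately show "inner4 a a = 1" and "inner4 b b = 1" and "inner4 a b = 0"
    by auto
qed

definition dual_root :: "(nat \<Rightarrow> real) \<Rightarrow> (nat \<Rightarrow> real) \<Rightarrow> nat \<Rightarrow> complex" where
  "dual_root c d k = Complex (c k) (d k)"

locale quadrangle_dual_data =
  fixes A B C D :: complex and u :: "nat \<Rightarrow> complex" and c d :: "nat \<Rightarrow> real"
  assumes perimeter: "perimeter A B C D = 2"
    and roots: "\<And>k. k \<in> {1..4} \<Longrightarrow> (u k)\<^sup>2 = edge A B C D k"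
    and basis: "dual_basis u c d"
begin

lemma Re_cnj_roots_add_dual_roots:
  assumes "k \<in> {1..4}" and "m \<in> {1..4}"
  shows "Re (cnj (u k) * u m) + Re (cnj (dual_root c d k) * dual_root c d m) = (if k = m then 1 else 0)"
proof -
  define a b where "a = (\<lambda>k. Re (u k))" and "b = (\<lambda>k. Im (u k))"
  define col where "col j = (if j = 1 then a else if j = 2 then b else if j = 3 then c else d)" for j :: nat
  have ab: "inner4 a a = 1" "inner4 b b = 1" "inner4 a b = 0"
    using edge_roots_orthonormal[OF perimeter roots] unfolding a_def b_def by blast+
  have cd: "inner4 c a = 0" "inner4 c b = 0" "inner4 d a = 0" "inner4 d b = 0"
       "inner4 c c = 1" "inner4 d d = 1" "inner4 c d = 0"
    using basis unfolding dual_basis_def Let_def a_def b_def by auto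
  have inner4_commute: "inner4 x y = inner4 y x" for x y
    by (simp add: inner4_def mult.commute)
  have "(\<Sum>k=1..4. col j k * col l k) = (if j = l then 1 else 0)" if "j \<in> {1..4}" "l \<in> {1..4}" for j l
  proof -
    have "j = 1 \<or> j = 2 \<or> j = 3 \<or> j = 4" and "l = 1 \<or> l = 2 \<or> l = 3 \<or> l = 4"
      using that by auto
    then have "inner4 (col j) (col l) = (if j = l then 1 else 0)"
      using ab cd inner4_commute[of a b] inner4_commute[of c a] inner4_commute[of c b]
        inner4_commute[of d a] inner4_commute[of d b] inner4_commute[of c d]
      by (auto simp: col_def)
    then show ?thesis by (simp add: inner4_def)
  qed
  from orthonormal_rows_if_orthonormal_columns_4[OF this assms]
  show ?thesis by (simp add: numeral_eq_Suc col_def a_def b_def dual_root_def)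
qed

lemma norm_dual_edge:
  assumes "k \<in> {1..4}"
  shows "cmod ((dual_root c d k)\<^sup>2) = 1 - cmod (edge A B C D k)"
proof -
  have "Re (cnj z * z) = (cmod z)\<^sup>2" for z
    using cmod_power2[of z] by (simp add: power2_eq_square)
  then have "(cmod (u k))\<^sup>2 + (cmod (dual_root c d k))\<^sup>2 = 1"
    using Re_cnj_roots_add_dual_roots[OF assms assms] by simp
  then show ?thesis
    using roots[OF assms] by (simp add: norm_power flip: norm_power)
qed

end

locale parallelogram_dual_data = quadrangle_dual_data +
  assumes parallelogram: "parallelogram A B C D"
begin

lemma norm_dual_edges:
  shows "cmod ((dual_root c d 1)\<^sup>2) = cmod (C - B)"
    and "cmod ((dual_root c d 2)\<^sup>2) = cmod (B - A)"
    and "cmod ((dual_root c d 3)\<^sup>2) = cmod (C - B)"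
proof -
  have "cmod (edge A B C D 3) = cmod (edge A B C D 1)" "cmod (edge A B C D 4) = cmod (edge A B C D 2)"
    using parallelogram_edges[OF parallelogram] by simp_all
  then have "cmod (B - A) + cmod (C - B) = 1"
    using perimeter by (simp add: perimeter_eq_sum_norm_edges) (simp add: edge_def)
  then show "cmod ((dual_root c d 1)\<^sup>2) = cmod (C - B)"
    and "cmod ((dual_root c d 2)\<^sup>2) = cmod (B - A)"
    and "cmod ((dual_root c d 3)\<^sup>2) = cmod (C - B)"
    using norm_dual_edge[of 1] norm_dual_edge[of 2] norm_dual_edge[of 3]
      parallelogram_edges(1)[OF parallelogram] norm_minus_commute[of A B]
    by (simp_all add: edge_def)
qed

lemma power2_dual_root_3: "(dual_root c d 3)\<^sup>2 = - ((dual_root c d 1)\<^sup>2)"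
proof -
  have "(u 3)\<^sup>2 = - ((u 1)\<^sup>2)"
    using roots parallelogram_edges(1)[OF parallelogram] by simp
  then have "Re (cnj (u 1) * u 3) = 0"
    by (simp add: power2_eq_neg_power2_iff)
  then have "Re (cnj (dual_root c d 1) * dual_root c d 3) = 0"
    using Re_cnj_roots_add_dual_roots[of 1 3] by simp
  moreover have "(cmod (dual_root c d 1))\<^sup>2 = (cmod (dual_root c d 3))\<^sup>2"
    using norm_dual_edges(1,3) by (simp add: norm_power)
  then have "cmod (dual_root c d 1) = cmod (dual_root c d 3)"
    by (simp add: power2_eq_iff_nonneg)
  ultimately show ?thesis
    by (simp add: power2_eq_neg_power2_iff)
qed

lemma Re_cnj_dual_edges:
  "Re (cnj ((dual_root c d 1)\<^sup>2) * (dual_root c d 2)\<^sup>2) = Re (cnj (- (C - B)) * - (B - A))"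
proof -
  define p q where "p = cnj (dual_root c d 1) * dual_root c d 2" and "q = cnj (u 1) * u 2"
  have "Re p = - Re q"
    using Re_cnj_roots_add_dual_roots[of 1 2] by (simp add: p_def q_def)
  moreover have "(cmod p)\<^sup>2 = (cmod q)\<^sup>2"
    using norm_dual_edges(1,2) roots[of 1] roots[of 2]
    by (simp add: p_def q_def norm_mult power_mult_distrib edge_def flip: norm_power)
  ultimately have "Re (p\<^sup>2) = Re (q\<^sup>2)"
    by (intro Re_power2_eq) simp_all
  have "Re (cnj ((dual_root c d 1)\<^sup>2) * (dual_root c d 2)\<^sup>2) = Re (p\<^sup>2)"
    by (simp add: p_def power_mult_distrib)
  also have "\<dots> = Re (q\<^sup>2)"
    by fact
  also have "\<dots> = Re (cnj (B - A) * (C - B))"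
    using roots[of 1] roots[of 2] by (simp add: q_def power_mult_distrib edge_def flip: complex_cnj_power)
  also have "\<dots> = Re (cnj (- (C - B)) * - (B - A))"
    by (simp add: algebra_simps)
  finally show ?thesis .
qed

lemma dual_quad_parallelogram:
  assumes "dual_quad c d K L M N"
  shows "parallelogram K L M N"
  using assms power2_dual_root_3 unfolding dual_quad_def parallelogram_def dual_root_def Let_def
  by (metis minus_diff_eq)

lemma dual_quad_congruent:
  assumes "dual_quad c d K L M N" and "C \<noteq> B"
  shows "\<exists>f. plane_isometry f \<and> f K = C \<and> f L = B \<and> f M = A \<and> f N = D"
proof -
  have "(dual_root c d 1)\<^sup>2 \<noteq> 0"
    using norm_dual_edges(1) assms(2) by auto
  moreover have "cmod ((dual_root c d 1)\<^sup>2) = cmod (- (C - B))"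
    and "cmod ((dual_root c d 2)\<^sup>2) = cmod (- (B - A))"
    using norm_dual_edges(1,2) by (simp_all only: norm_minus_cancel)
  ultimately obtain f where iso: "plane_isometry f" and f: "\<And>s t.
      f (K + of_real s * (dual_root c d 1)\<^sup>2 + of_real t * (dual_root c d 2)\<^sup>2)
        = C + of_real s * - (C - B) + of_real t * - (B - A)"
    using congruent_pairs_plane_isometry[of _ _ _ _ K C] Re_cnj_dual_edges by metis
  have "L = K + (dual_root c d 1)\<^sup>2" "M = K + (dual_root c d 1)\<^sup>2 + (dual_root c d 2)\<^sup>2"
    "N = K + (dual_root c d 2)\<^sup>2" "D = C - (B - A)"
    using assms(1) power2_dual_root_3 parallelogram
    by (auto simp: dual_quad_def dual_root_def parallelogram_def algebra_simps)
  then show ?thesis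
    using iso f[of 0 0] f[of 1 0] f[of 1 1] f[of 0 1] by auto
qed

end

theorem theorem8p2:
  fixes A B C D K L M N :: complex and u :: "nat \<Rightarrow> complex" and c d :: "nat \<Rightarrow> real"
  assumes "nondegenerate_quad A B C D"
    and "parallelogram A B C D"
    and "perimeter A B C D = 2"
    and "associated_roots A B C D u"
    and "dual_basis u c d"
    and "dual_quad c d K L M N"
  shows "cmod (L - K) = cmod (C - B) \<and> cmod (M - L) = cmod (B - A) \<and> cmod (M - K) = cmod (C - A)
         \<and> parallelogram K L M N
         \<and> (\<exists>f. plane_isometry f \<and> f K = C \<and> f L = B \<and> f M = A \<and> f N = D)"
proof -
  interpret parallelogram_dual_data A B C D u c d
    using assms(2-5) by unfold_locales (auto simp: associated_roots_def)
  have "C \<noteq> B"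
    using edge_nonzero_if_nondegenerate_quad[OF assms(1), of 2] by (simp add: edge_def)
  then obtain f where iso: "plane_isometry f" and vertices: "f K = C" "f L = B" "f M = A" "f N = D"
    using dual_quad_congruent[OF assms(6)] by blast
  have "cmod (M - K) = cmod (C - A)"
    using iso vertices unfolding plane_isometry_def by (metis dist_norm dist_commute)
  moreover have "L - K = (dual_root c d 1)\<^sup>2" "M - L = (dual_root c d 2)\<^sup>2"
    using assms(6) by (simp_all add: dual_quad_def dual_root_def)
  ultimately show ?thesis
    using norm_dual_edges(1,2) dual_quad_parallelogram[OF assms(6)] iso vertices by auto
qed

end
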